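(* In the #-KEG, suppose that the IA algorithm $\mathcal{A}$, whenever the remaining external graph $(V,E^I(\mathbf{M}))$ has several maximum-cardinality matchings, selects one that lexicographically maximizes the numbers of matched vertices of the players taken in non-increasing order of their number of revealed vertices (i.e. it first maximizes the number of matched vertices of the player with the most revealed vertices, then of the second, etc.), this rule being applied in whatever game results from the players' revelations. Then no player has a strict incentive to hide vertices: for every player $p$, every profile $M^{-p}$ of matchings of the opponents' graphs, and every subset $V'\subseteq V^p$, the maximum utility player $p$ can achieve (over matchings $M^p$ of $G^p$) when all her vertices are revealed is at least $2\nu(G^p[V'])$ plus the maximum utility she can achieve (over matchings of $G^p-V'$) in the game in which the vertices of $V'$ and their incident edges are removed, where $\nu(G^p[V'])$ is the size of a maximum matching of the subgraph of $G^p$ induced by $V'$.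
   Context: The #-KEG: $N=\{1,\dots,n\}$ is a finite set of players; player $p$ has internal graph $G^p=(V^p,E^p)$ (vertex sets pairwise disjoint); $E^I$ is a set of external edges each joining vertices of two different players; $G=(V,E)$ with $V=\bigcup_pV^p$, $E=E^I\cup\bigcup_pE^p$. A strategy of player $p$ is a matching $M^p$ of $G^p$. Given $\mathbf{M}=(M^1,\dots,M^n)$, $E^I(\mathbf{M})$ is the set of external edges with both endpoints uncovered by $\bigcup_pM^p$, and the IA selects a maximum-cardinality matching $M^I=\mathcal{A}(\mathbf{M})$ of $(V,E^I(\mathbf{M}))$ via a deterministic algorithm $\mathcal{A}$. With $M^I_p$ the edges of $M^I$ incident to $V^p$, player $p$'s utility is $2|M^p|+|M^I_p|$. Hiding a set $V'\subseteq V^p$ means that the game is played on $G$ with $V'$ and all edges incident to $V'$ removed, while player $p$ can additionally match the hidden vertices among themselves using edges of $G^p$ inside $V'$, each such internal edge adding 2 to her utility. *)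

theory Defs
  imports Main
begin

text \<open>Vertices have type 'v, players have type 'p (linearly ordered; the order
  is used only to break ties between players with equally many revealed vertices).
  own v is the player owning vertex v.\<close>

definition is_edge :: "'v set \<Rightarrow> bool" where
  "is_edge e \<longleftrightarrow> (\<exists>u w. u \<noteq> w \<and> e = {u, w})"

definition matching_of :: "'v set set \<Rightarrow> 'v set set \<Rightarrow> bool" where
  "matching_of F M \<longleftrightarrow> M \<subseteq> F \<and> (\<forall>e\<in>M. \<forall>e'\<in>M. e \<noteq> e' \<longrightarrow> e \<inter> e' = {})"

definition max_matching_of :: "'v set set \<Rightarrow> 'v set set \<Rightarrow> bool" where
  "max_matching_of F M \<longleftrightarrow> matching_of F M \<and> (\<forall>M'. matching_of F M' \<longrightarrow> card M' \<le> card M)"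

definition nu :: "'v set set \<Rightarrow> nat" where
  "nu F = Max (card ` {M. matching_of F M})"

definition owned :: "('v \<Rightarrow> 'p) \<Rightarrow> 'v set \<Rightarrow> 'p \<Rightarrow> 'v set" where
  "owned own A q = {v \<in> A. own v = q}"

definition cov :: "('v \<Rightarrow> 'p) \<Rightarrow> 'v set set \<Rightarrow> 'p \<Rightarrow> nat" where
  "cov own M q = card (owned own (\<Union>M) q)"

text \<open>prior own R r q: r comes strictly before q in the order of non-increasing
  number of revealed vertices (R = revealed vertex set), ties broken by the order on players.\<close>
definition prior :: "('v \<Rightarrow> 'p::linorder) \<Rightarrow> 'v set \<Rightarrow> 'p \<Rightarrow> 'p \<Rightarrow> bool" where
  "prior own R r q \<longleftrightarrow> card (owned own R r) > card (owned own R q)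
     \<or> (card (owned own R r) = card (owned own R q) \<and> r < q)"

definition lex_geq :: "'p::linorder set \<Rightarrow> ('v \<Rightarrow> 'p) \<Rightarrow> 'v set \<Rightarrow> 'v set set \<Rightarrow> 'v set set \<Rightarrow> bool" where
  "lex_geq N own R M M' \<longleftrightarrow>
     (\<forall>q\<in>N. cov own M q = cov own M' q) \<or>
     (\<exists>q\<in>N. cov own M q > cov own M' q \<and>
        (\<forall>r\<in>N. prior own R r q \<longrightarrow> cov own M r = cov own M' r))"

definition ia_rule :: "'p::linorder set \<Rightarrow> ('v \<Rightarrow> 'p) \<Rightarrow> 'v set \<Rightarrow> 'v set set \<Rightarrow> 'v set set \<Rightarrow> bool" where
  "ia_rule N own R F M \<longleftrightarrow> max_matching_of F M \<and>
     (\<forall>M'. max_matching_of F M' \<longrightarrow> lex_geq N own R M M')"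

text \<open>External edges available to the IA: inside the revealed set R and with both
  endpoints uncovered by the union U of the internal matchings.\<close>
definition available :: "'v set set \<Rightarrow> 'v set \<Rightarrow> 'v set \<Rightarrow> 'v set set" where
  "available EI R U = {e \<in> EI. e \<subseteq> R \<and> e \<inter> U = {}}"

text \<open>Utility of player p under profile Mq, in the game on revealed vertex set R,
  with IA algorithm IA (input: revealed vertex set and remaining external edges).\<close>
definition utility :: "'p set \<Rightarrow> ('v \<Rightarrow> 'p) \<Rightarrow> 'v set set
    \<Rightarrow> ('v set \<Rightarrow> 'v set set \<Rightarrow> 'v set set) \<Rightarrow> 'v set \<Rightarrow> ('p \<Rightarrow> 'v set set) \<Rightarrow> 'p \<Rightarrow> nat" where
  "utility N own EI IA R Mq p =
     2 * card (Mq p) +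
     card {e \<in> IA R (available EI R (\<Union>q\<in>N. \<Union>(Mq q))). \<exists>v\<in>e. own v = p}"

definition best_utility :: "'p set \<Rightarrow> ('v \<Rightarrow> 'p) \<Rightarrow> 'v set set
    \<Rightarrow> ('v set \<Rightarrow> 'v set set \<Rightarrow> 'v set set) \<Rightarrow> 'v set \<Rightarrow> 'v set set
    \<Rightarrow> ('p \<Rightarrow> 'v set set) \<Rightarrow> 'p \<Rightarrow> nat" where
  "best_utility N own EI IA R Fp Mo p =
     Max ((\<lambda>Mp. utility N own EI IA R (Mo(p := Mp)) p) ` {Mp. matching_of Fp Mp})"

end

theory Submission
  imports Defs
begin

text \<open>Fix the opponents' matchings, an optimal strategy Mh of p in the game where V' is hidden,
  and a maximum matching Mv of G^p[V']. With V' revealed, p can play Mh \<union> Mv, whose internal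
  part is worth exactly 2|Mh| + 2\<nu>(G^p[V']); so it suffices that the IA then matches at least as
  many vertices of p as in the hidden game. Revealing V' only adds external edges meeting V', and
  it can only move p forward in the priority order.

  Compare the two selected matchings M1 (hidden) and M2 (revealed) by induction on the size of
  their symmetric difference. If M1 covers a vertex v of p that M2 misses, the component of the
  symmetric difference starting at v is an alternating path, whose other end w is covered by M2
  only (otherwise the path would augment M2). Swapping along the path turns M2 into a maximum
  matching covering v instead of w, and M1 into a matching of the hidden graph covering w instead
  of v. If w belongs to p, the first swap ties with M2 and is closer to M1; otherwise, whichever
  of p and the owner of w comes first, one of the two swaps beats M2 or M1 lexicographically.\<close>

lemma card_Union_matching:
  assumes "matching_of F M" "finite F" "\<forall>e\<in>F. is_edge e"
  shows "card (\<Union>M) = 2 * card M"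
proof -
  have M: "M \<subseteq> F" "pairwise disjnt M"
    using assms(1) by (auto simp: matching_of_def pairwise_def disjnt_def)
  have card_edge: "card e = 2" if "e \<in> M" for e
  proof -
    have "is_edge e" using that M(1) assms(3) by blast
    then show ?thesis by (auto simp: is_edge_def)
  qed
  have "card (\<Union>M) = sum card M"
    by (rule card_Union_disjoint[OF M(2)]) (use card_edge in \<open>auto intro: card_ge_0_finite\<close>)
  also have "\<dots> = 2 * card M"
    using card_edge by simp
  finally show ?thesis .
qed

lemma finite_Union_matching:
  assumes "matching_of F M" "finite F" "\<forall>e\<in>F. is_edge e"
  shows "finite (\<Union>M)"
proof (rule finite_Union)
  show "finite M" using assms(1,2) finite_subset unfolding matching_of_def by blast
  show "finite e" if "e \<in> M" for e
  proof -
    have "is_edge e" using that assms(1,3) unfolding matching_of_def by blast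
    then show ?thesis by (auto simp: is_edge_def)
  qed
qed

lemma finite_matchings: "finite F \<Longrightarrow> finite {M. matching_of F M}"
  by (rule finite_subset[of _ "Pow F"]) (auto simp: matching_of_def)

lemma matching_of_empty [simp]: "matching_of F {}"
  by (simp add: matching_of_def)

lemma matching_of_mono: "F \<subseteq> F' \<Longrightarrow> matching_of F M \<Longrightarrow> matching_of F' M"
  unfolding matching_of_def by blast

lemma matching_of_vertex_edge_unique:
  "matching_of F M \<Longrightarrow> e \<in> M \<Longrightarrow> e' \<in> M \<Longrightarrow> x \<in> e \<Longrightarrow> x \<in> e' \<Longrightarrow> e = e'"
  unfolding matching_of_def by blast

lemma matching_of_Un:
  assumes "matching_of F M1" "matching_of F M2" "\<Union>M1 \<inter> \<Union>M2 = {}"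
  shows "matching_of F (M1 \<union> M2)"
  unfolding matching_of_def
proof (intro conjI ballI impI)
  show "M1 \<union> M2 \<subseteq> F" using assms(1,2) by (simp add: matching_of_def)
  fix e e' assume "e \<in> M1 \<union> M2" "e' \<in> M1 \<union> M2" "e \<noteq> e'"
  then consider "e \<in> M1" "e' \<in> M1" | "e \<in> M2" "e' \<in> M2" | "e \<in> M1" "e' \<in> M2" | "e \<in> M2" "e' \<in> M1"
    by blast
  then show "e \<inter> e' = {}"
  proof cases
    case 1 then show ?thesis using assms(1) \<open>e \<noteq> e'\<close> unfolding matching_of_def by blast
  next
    case 2 then show ?thesis using assms(2) \<open>e \<noteq> e'\<close> unfolding matching_of_def by blast
  qed (use assms(3) in blast)+
qed

lemma matching_of_split:
  assumes "matching_of {e \<in> F. e \<inter> X = {}} M1" "matching_of {e \<in> F. e \<subseteq> X} M2" "{} \<notin> F"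
  shows "matching_of F (M1 \<union> M2)" "M1 \<inter> M2 = {}"
proof -
  have M: "M1 \<subseteq> {e \<in> F. e \<inter> X = {}}" "M2 \<subseteq> {e \<in> F. e \<subseteq> X}"
    using assms(1,2) by (simp_all add: matching_of_def)
  show "matching_of F (M1 \<union> M2)"
  proof (rule matching_of_Un)
    show "matching_of F M1" by (rule matching_of_mono[OF _ assms(1)]) blast
    show "matching_of F M2" by (rule matching_of_mono[OF _ assms(2)]) blast
    show "\<Union>M1 \<inter> \<Union>M2 = {}" using M by blast
  qed
  have "e = {}" if "e \<in> M1" "e \<in> M2" for e
    using that M by blast
  then show "M1 \<inter> M2 = {}"
    using M assms(3) by blast
qed

lemma card_insert_Diff_swap:
  "finite A \<Longrightarrow> b \<in> A \<Longrightarrow> a \<notin> A \<Longrightarrow> card (insert a (A - {b})) = card A"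
  by (metis card_Suc_Diff1 card_insert_disjoint finite_Diff Diff_iff)

lemma card_Union_le_max_matching:
  assumes "max_matching_of F M" "matching_of F M'" "finite F" "\<forall>e\<in>F. is_edge e"
  shows "card (\<Union>M') \<le> card (\<Union>M)"
  using assms card_Union_matching[OF _ assms(3,4)] by (simp add: max_matching_of_def)

lemma max_matching_of_card_Union_eq:
  assumes "max_matching_of F M" "matching_of F M'" "finite F" "\<forall>e\<in>F. is_edge e"
    and "card (\<Union>M') = card (\<Union>M)"
  shows "max_matching_of F M'"
  using assms card_Union_matching[OF _ assms(3,4)] by (simp add: max_matching_of_def)

lemma nu_attained:
  assumes "finite F"
  obtains M where "matching_of F M" "card M = nu F"
proof -
  have "finite (card ` {M. matching_of F M})"
    using finite_matchings[OF assms] by simp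
  moreover have "card ` {M. matching_of F M} \<noteq> {}"
    using matching_of_empty by blast
  ultimately have "nu F \<in> card ` {M. matching_of F M}"
    unfolding nu_def by (rule Max_in)
  then show ?thesis using that by auto
qed

section \<open>Alternating paths\<close>

lemma is_edge_other: "is_edge e \<Longrightarrow> v \<in> e \<Longrightarrow> \<exists>u. e = {v, u} \<and> u \<noteq> v"
  unfolding is_edge_def by auto

definition degree_le_2 :: "'v set set \<Rightarrow> bool" where
  "degree_le_2 D \<longleftrightarrow>
     (\<forall>x. \<forall>e1\<in>D. \<forall>e2\<in>D. \<forall>e3\<in>D. x \<in> e1 \<longrightarrow> x \<in> e2 \<longrightarrow> x \<in> e3 \<longrightarrow> e1 = e2 \<or> e1 = e3 \<or> e2 = e3)"

text \<open>C is the component of D through the leaf v: a path from v to its other end w, whose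
  inner vertices lie on two edges each.\<close>

lemma path_component_from_leaf:
  assumes "finite D" "\<forall>e\<in>D. is_edge e" "degree_le_2 D"
    and "e0 \<in> D" "v \<in> e0" "\<forall>e\<in>D. v \<in> e \<longrightarrow> e = e0"
  shows "\<exists>C w. C \<subseteq> D \<and> e0 \<in> C \<and> (\<forall>e\<in>D. e \<inter> \<Union>C \<noteq> {} \<longrightarrow> e \<in> C)
     \<and> w \<in> \<Union>C \<and> w \<noteq> v
     \<and> (\<exists>e\<in>D. \<forall>e'\<in>D. w \<in> e' \<longleftrightarrow> e' = e)
     \<and> (\<forall>x\<in>\<Union>C - {v, w}. \<exists>e1\<in>D. \<exists>e2\<in>D. e1 \<noteq> e2 \<and> x \<in> e1 \<and> x \<in> e2)"
  using assms
proof (induction D arbitrary: v e0 rule: finite_psubset_induct)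
  case (psubset D)
  obtain u where u: "e0 = {v, u}" "u \<noteq> v"
    using is_edge_other[of e0 v] psubset.prems(1,3,4) by blast
  show ?case
  proof (cases "\<forall>e\<in>D. u \<in> e \<longrightarrow> e = e0")
    case True
    have u_e0: "u \<in> e0" using u(1) by simp
    show ?thesis
    proof (intro exI[of _ "{e0}"] exI[of _ u] conjI)
      show "\<forall>e\<in>D. e \<inter> \<Union>{e0} \<noteq> {} \<longrightarrow> e \<in> {e0}"
        using True psubset.prems(5) u(1) by auto
      show "\<exists>e\<in>D. \<forall>e'\<in>D. u \<in> e' \<longleftrightarrow> e' = e"
        using True psubset.prems(3) u_e0 by blast
    qed (use psubset.prems(3) u in auto)
  next
    case False
    then obtain f where f: "f \<in> D" "u \<in> f" "f \<noteq> e0" by blast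
    have f_unique: "\<forall>e\<in>D - {e0}. u \<in> e \<longrightarrow> e = f"
      using psubset.prems(2,3) f u(1) unfolding degree_le_2_def by (metis DiffE insertI1 insertI2)
    have deg: "degree_le_2 (D - {e0})"
      using psubset.prems(2) unfolding degree_le_2_def by blast
    have smaller: "D - {e0} \<subset> D" "\<forall>e\<in>D - {e0}. is_edge e" "f \<in> D - {e0}"
      using psubset.prems(1,3) f by auto
    obtain C w where C: "C \<subseteq> D - {e0}" "f \<in> C"
      "\<forall>e\<in>D - {e0}. e \<inter> \<Union>C \<noteq> {} \<longrightarrow> e \<in> C" "w \<in> \<Union>C" "w \<noteq> u"
      "\<exists>e\<in>D - {e0}. \<forall>e'\<in>D - {e0}. w \<in> e' \<longleftrightarrow> e' = e"
      "\<forall>x\<in>\<Union>C - {u, w}. \<exists>e1\<in>D - {e0}. \<exists>e2\<in>D - {e0}. e1 \<noteq> e2 \<and> x \<in> e1 \<and> x \<in> e2"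
      using psubset.IH[OF smaller(1,2) deg smaller(3) f(2) f_unique] by (elim exE conjE)
    have v_notin: "\<forall>e\<in>D - {e0}. v \<notin> e"
      using psubset.prems(5) by blast
    have "w \<noteq> v" "w \<notin> e0"
      using C(1,4,5) v_notin u(1) by auto
    show ?thesis
    proof (rule exI[of _ "insert e0 C"], rule exI[of _ w], intro conjI)
      show "\<forall>e\<in>D. e \<inter> \<Union>(insert e0 C) \<noteq> {} \<longrightarrow> e \<in> insert e0 C"
      proof (intro ballI impI)
        fix e assume e: "e \<in> D" "e \<inter> \<Union>(insert e0 C) \<noteq> {}"
        show "e \<in> insert e0 C"
        proof (cases "e = e0 \<or> e \<inter> \<Union>C \<noteq> {}")
          case False
          then have "u \<in> e" using e v_notin u(1) by auto
          then show ?thesis using f_unique e(1) False C(2) by blast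
        qed (use C(3) e(1) in blast)
      qed
      show "\<exists>e\<in>D. \<forall>e'\<in>D. w \<in> e' \<longleftrightarrow> e' = e"
        using C(6) \<open>w \<notin> e0\<close> by (metis DiffE DiffI singletonD)
      show "\<forall>x\<in>\<Union>(insert e0 C) - {v, w}. \<exists>e1\<in>D. \<exists>e2\<in>D. e1 \<noteq> e2 \<and> x \<in> e1 \<and> x \<in> e2"
      proof
        fix x assume x: "x \<in> \<Union>(insert e0 C) - {v, w}"
        show "\<exists>e1\<in>D. \<exists>e2\<in>D. e1 \<noteq> e2 \<and> x \<in> e1 \<and> x \<in> e2"
        proof (cases "x = u")
          case True
          moreover have "u \<in> e0" using u(1) by simp
          ultimately show ?thesis using f psubset.prems(3) by blast
        next
          case False
          then have "x \<in> \<Union>C - {u, w}" using x u(1) by auto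
          then show ?thesis using C(7) by blast
        qed
      qed
      show "insert e0 C \<subseteq> D" using C(1) psubset.prems(3) by blast
      show "e0 \<in> insert e0 C" by simp
      show "w \<in> \<Union>(insert e0 C)" using C(4) by blast
      show "w \<noteq> v" by fact
    qed
  qed
qed

lemma degree_le_2_sym_diff:
  assumes "matching_of F M1" "matching_of F M2"
  shows "degree_le_2 (sym_diff M1 M2)"
  unfolding degree_le_2_def
proof (intro allI ballI impI)
  fix x e1 e2 e3
  assume "e1 \<in> sym_diff M1 M2" "e2 \<in> sym_diff M1 M2" "e3 \<in> sym_diff M1 M2"
    and "x \<in> e1" "x \<in> e2" "x \<in> e3"
  then show "e1 = e2 \<or> e1 = e3 \<or> e2 = e3"
    using matching_of_vertex_edge_unique[OF assms(1)] matching_of_vertex_edge_unique[OF assms(2)]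
    by (metis DiffE UnE)
qed

lemma sym_diff_shared_vertex:
  assumes "matching_of F M1" "matching_of F M2"
    and "e1 \<in> sym_diff M1 M2" "e2 \<in> sym_diff M1 M2" "e1 \<noteq> e2" "x \<in> e1" "x \<in> e2"
  shows "x \<in> \<Union>M1 \<inter> \<Union>M2"
proof -
  have "(e1 \<in> M1 \<and> e2 \<in> M2) \<or> (e1 \<in> M2 \<and> e2 \<in> M1)"
    using assms(3-7) matching_of_vertex_edge_unique[OF assms(1)] matching_of_vertex_edge_unique[OF assms(2)]
    by blast
  then show ?thesis using assms(6,7) by blast
qed

lemma sym_diff_leaf_vertex:
  assumes "matching_of F M1" "matching_of F M2"
    and "e \<in> sym_diff M1 M2" "\<forall>e'\<in>sym_diff M1 M2. x \<in> e' \<longleftrightarrow> e' = e"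
  shows "x \<in> \<Union>M1 - \<Union>M2 \<or> x \<in> \<Union>M2 - \<Union>M1"
proof -
  have "x \<in> e" using assms(3,4) by blast
  have "e' = e" if "e' \<in> M1 \<union> M2" "x \<in> e'" for e'
  proof (cases "e' \<in> M1 \<inter> M2")
    case True
    then show ?thesis
      using assms(3) that(2) \<open>x \<in> e\<close> matching_of_vertex_edge_unique[OF assms(1)]
        matching_of_vertex_edge_unique[OF assms(2)] by blast
  qed (use assms(4) that in blast)
  then show ?thesis using assms(3) \<open>x \<in> e\<close> by blast
qed

lemma sym_diff_component_closed:
  assumes "matching_of F M1" "matching_of F M2" "C \<subseteq> sym_diff M1 M2"
    and "\<forall>e\<in>sym_diff M1 M2. e \<inter> \<Union>C \<noteq> {} \<longrightarrow> e \<in> C"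
    and "e \<in> M1 \<union> M2" "e \<inter> \<Union>C \<noteq> {}"
  shows "e \<in> C"
proof (cases "e \<in> M1 \<inter> M2")
  case True
  obtain h x where "h \<in> C" "x \<in> h" "x \<in> e" using assms(6) by blast
  then show ?thesis
    using True assms(3) matching_of_vertex_edge_unique[OF assms(1)]
      matching_of_vertex_edge_unique[OF assms(2)] by blast
qed (use assms(4-6) in blast)

lemma matching_swap:
  assumes "matching_of F M1" "matching_of F M2" "C \<subseteq> sym_diff M1 M2"
    and "\<forall>e\<in>sym_diff M1 M2. e \<inter> \<Union>C \<noteq> {} \<longrightarrow> e \<in> C"
  shows "matching_of F ((M2 - C) \<union> (M1 \<inter> C))"
  unfolding matching_of_def
proof (intro conjI ballI impI)
  show "(M2 - C) \<union> (M1 \<inter> C) \<subseteq> F"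
    using assms(1,2) unfolding matching_of_def by blast
  have cross: "a \<inter> b = {}" if "a \<in> M2 - C" "b \<in> M1 \<inter> C" for a b
    using sym_diff_component_closed[OF assms, of a] that by blast
  fix e e' assume e: "e \<in> (M2 - C) \<union> (M1 \<inter> C)" "e' \<in> (M2 - C) \<union> (M1 \<inter> C)" "e \<noteq> e'"
  then consider "e \<in> M2" "e' \<in> M2" | "e \<in> M1" "e' \<in> M1"
    | "e \<in> M2 - C" "e' \<in> M1 \<inter> C" | "e' \<in> M2 - C" "e \<in> M1 \<inter> C"
    by blast
  then show "e \<inter> e' = {}"
  proof cases
    case 1 then show ?thesis using assms(2) e(3) unfolding matching_of_def by blast
  next
    case 2 then show ?thesis using assms(1) e(3) unfolding matching_of_def by blast
  next
    case 3 then show ?thesis using cross by blast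
  next
    case 4 then show ?thesis using cross[of e' e] by blast
  qed
qed

lemma Union_swap:
  assumes "matching_of F M1" "matching_of F M2" "C \<subseteq> sym_diff M1 M2"
    and "\<forall>e\<in>sym_diff M1 M2. e \<inter> \<Union>C \<noteq> {} \<longrightarrow> e \<in> C"
  shows "\<Union>((M2 - C) \<union> (M1 \<inter> C)) = (\<Union>M2 - \<Union>C) \<union> (\<Union>M1 \<inter> \<Union>C)"
  using sym_diff_component_closed[OF assms] by blast

lemma alternating_path_from:
  assumes M1: "matching_of F M1" and M2: "matching_of F M2"
    and F: "finite F" "\<forall>e\<in>F. is_edge e" and v: "v \<in> \<Union>M1" "v \<notin> \<Union>M2"
  obtains C w where "C \<subseteq> sym_diff M1 M2"
    "\<forall>e\<in>sym_diff M1 M2. e \<inter> \<Union>C \<noteq> {} \<longrightarrow> e \<in> C"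
    "v \<in> \<Union>C" "w \<in> \<Union>C" "w \<noteq> v" "\<Union>C - {v, w} \<subseteq> \<Union>M1 \<inter> \<Union>M2"
    "w \<in> \<Union>M1 - \<Union>M2 \<or> w \<in> \<Union>M2 - \<Union>M1"
proof -
  obtain e0 where e0: "e0 \<in> M1" "v \<in> e0" using v(1) by blast
  have D: "finite (sym_diff M1 M2)" "\<forall>e\<in>sym_diff M1 M2. is_edge e"
    using M1 M2 F finite_subset unfolding matching_of_def by auto
  have leaf: "e0 \<in> sym_diff M1 M2" "\<forall>e\<in>sym_diff M1 M2. v \<in> e \<longrightarrow> e = e0"
    using e0 v(2) matching_of_vertex_edge_unique[OF M1] by auto
  obtain C w where C: "C \<subseteq> sym_diff M1 M2" "e0 \<in> C" "\<forall>e\<in>sym_diff M1 M2. e \<inter> \<Union>C \<noteq> {} \<longrightarrow> e \<in> C"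
    "w \<in> \<Union>C" "w \<noteq> v" "\<exists>e\<in>sym_diff M1 M2. \<forall>e'\<in>sym_diff M1 M2. w \<in> e' \<longleftrightarrow> e' = e"
    "\<forall>x\<in>\<Union>C - {v, w}. \<exists>e1\<in>sym_diff M1 M2. \<exists>e2\<in>sym_diff M1 M2. e1 \<noteq> e2 \<and> x \<in> e1 \<and> x \<in> e2"
    using path_component_from_leaf[OF D degree_le_2_sym_diff[OF M1 M2] leaf(1) e0(2) leaf(2)] by (elim exE conjE)
  show ?thesis
  proof
    show "\<Union>C - {v, w} \<subseteq> \<Union>M1 \<inter> \<Union>M2"
      using C(7) sym_diff_shared_vertex[OF M1 M2] by blast
    obtain e where "e \<in> sym_diff M1 M2" "\<forall>e'\<in>sym_diff M1 M2. w \<in> e' \<longleftrightarrow> e' = e"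
      using C(6) by blast
    then show "w \<in> \<Union>M1 - \<Union>M2 \<or> w \<in> \<Union>M2 - \<Union>M1"
      by (rule sym_diff_leaf_vertex[OF M1 M2])
    show "v \<in> \<Union>C" using C(2) e0(2) by blast
  qed (fact C)+
qed

lemma alternating_path_to_max_matching:
  assumes M1: "matching_of F M1" and M2: "max_matching_of F M2"
    and F: "finite F" "\<forall>e\<in>F. is_edge e" and v: "v \<in> \<Union>M1" "v \<notin> \<Union>M2"
  obtains C w where "C \<subseteq> sym_diff M1 M2"
    "\<forall>e\<in>sym_diff M1 M2. e \<inter> \<Union>C \<noteq> {} \<longrightarrow> e \<in> C"
    "v \<in> \<Union>C" "w \<in> \<Union>C" "\<Union>C - {v, w} \<subseteq> \<Union>M1 \<inter> \<Union>M2" "w \<in> \<Union>M2 - \<Union>M1"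
proof -
  have M2': "matching_of F M2" using M2 by (simp add: max_matching_of_def)
  obtain C w where C: "C \<subseteq> sym_diff M1 M2" "\<forall>e\<in>sym_diff M1 M2. e \<inter> \<Union>C \<noteq> {} \<longrightarrow> e \<in> C"
    "v \<in> \<Union>C" "w \<in> \<Union>C" "w \<noteq> v" "\<Union>C - {v, w} \<subseteq> \<Union>M1 \<inter> \<Union>M2"
    and w: "w \<in> \<Union>M1 - \<Union>M2 \<or> w \<in> \<Union>M2 - \<Union>M1"
    using alternating_path_from[OF M1 M2' F v] by blast
  have "w \<notin> \<Union>M1 - \<Union>M2"
  proof
    assume "w \<in> \<Union>M1 - \<Union>M2"
    \<comment> \<open>then C is an augmenting path for M2\<close>
    then have "\<Union>((M2 - C) \<union> (M1 \<inter> C)) = insert v (insert w (\<Union>M2))"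
      using Union_swap[OF M1 M2' C(1,2)] C(3,4,6) v by auto
    then have "card (\<Union>((M2 - C) \<union> (M1 \<inter> C))) = card (\<Union>M2) + 2"
      using finite_Union_matching[OF M2' F] C(5) v(2) \<open>w \<in> \<Union>M1 - \<Union>M2\<close> by simp
    then show False
      using card_Union_le_max_matching[OF M2 matching_swap[OF M1 M2' C(1,2)] F] by simp
  qed
  then show ?thesis using that C w by blast
qed

lemma swap_alternating_path:
  assumes M1: "matching_of F M1" and M2: "matching_of F M2"
    and C: "C \<subseteq> sym_diff M1 M2" "\<forall>e\<in>sym_diff M1 M2. e \<inter> \<Union>C \<noteq> {} \<longrightarrow> e \<in> C"
    and "v \<in> \<Union>C" "w \<in> \<Union>C" "\<Union>C - {v, w} \<subseteq> \<Union>M1 \<inter> \<Union>M2"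
    and "v \<in> \<Union>M1 - \<Union>M2" "w \<in> \<Union>M2 - \<Union>M1"
  shows "matching_of F ((M2 - C) \<union> (M1 \<inter> C))"
    and "\<Union>((M2 - C) \<union> (M1 \<inter> C)) = insert v (\<Union>M2 - {w})"
  using matching_swap[OF M1 M2 C] Union_swap[OF M1 M2 C] assms(5-9) by auto

lemma alternating_path_exchange:
  assumes M1: "matching_of F M1" and M2: "max_matching_of F M2"
    and F: "finite F" "\<forall>e\<in>F. is_edge e" and v: "v \<in> \<Union>M1" "v \<notin> \<Union>M2"
  obtains w N1 N2 where "w \<in> \<Union>M2 - \<Union>M1"
    "max_matching_of F N2" "\<Union>N2 = insert v (\<Union>M2 - {w})" "card (sym_diff M1 N2) < card (sym_diff M1 M2)"
    "matching_of F N1" "\<Union>N1 = insert w (\<Union>M1 - {v})" "\<forall>e\<in>N1 - M1. e \<subseteq> insert w (\<Union>M1)"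
proof -
  have M2': "matching_of F M2" using M2 by (simp add: max_matching_of_def)
  obtain C w where C: "C \<subseteq> sym_diff M1 M2" "\<forall>e\<in>sym_diff M1 M2. e \<inter> \<Union>C \<noteq> {} \<longrightarrow> e \<in> C"
    and path: "v \<in> \<Union>C" "w \<in> \<Union>C" "\<Union>C - {v, w} \<subseteq> \<Union>M1 \<inter> \<Union>M2"
    and w: "w \<in> \<Union>M2 - \<Union>M1"
    using alternating_path_to_max_matching[OF M1 M2 F v] by blast
  define N1 where "N1 = (M1 - C) \<union> (M2 \<inter> C)"
  define N2 where "N2 = (M2 - C) \<union> (M1 \<inter> C)"
  have N2: "matching_of F N2" "\<Union>N2 = insert v (\<Union>M2 - {w})"
    using swap_alternating_path[OF M1 M2' C path] v w unfolding N2_def by auto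
  have "C \<subseteq> sym_diff M2 M1" "\<forall>e\<in>sym_diff M2 M1. e \<inter> \<Union>C \<noteq> {} \<longrightarrow> e \<in> C"
    "\<Union>C - {w, v} \<subseteq> \<Union>M2 \<inter> \<Union>M1"
    using C path(3) by blast+
  then have N1: "matching_of F N1" "\<Union>N1 = insert w (\<Union>M1 - {v})"
    using swap_alternating_path[OF M2' M1, of C w v] path(1,2) v w unfolding N1_def by auto
  have "w \<in> \<Union>M2" using w by blast
  then have "card (\<Union>N2) = card (\<Union>M2)"
    unfolding N2(2) by (rule card_insert_Diff_swap[OF finite_Union_matching[OF M2' F] _ v(2)])
  then have "max_matching_of F N2"
    using max_matching_of_card_Union_eq[OF M2 N2(1) F] by simp
  moreover have "card (sym_diff M1 N2) < card (sym_diff M1 M2)"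
  proof -
    have "sym_diff M1 M2 \<subseteq> F"
      using M1 M2' unfolding matching_of_def by blast
    then have "finite (sym_diff M1 M2)" using F(1) by (rule finite_subset)
    moreover have "sym_diff M1 N2 = sym_diff M1 M2 - C"
      using C(1) unfolding N2_def by blast
    ultimately show ?thesis
      using C(1) path(1) by (auto intro!: psubset_card_mono)
  qed
  moreover have "\<forall>e\<in>N1 - M1. e \<subseteq> insert w (\<Union>M1)"
    using path(3) v(1) unfolding N1_def by blast
  ultimately show ?thesis
    using that w N1 N2 by blast
qed

lemma finite_owned: "finite A \<Longrightarrow> finite (owned own A q)"
  by (simp add: owned_def)

lemma card_owned_exchange_same_owner:
  assumes "finite A" "a \<notin> A" "b \<in> A" "own a = own b"
  shows "card (owned own (insert a (A - {b})) q) = card (owned own A q)"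
proof (cases "q = own a")
  case True
  then have "owned own (insert a (A - {b})) q = insert a (owned own A q - {b})"
    "b \<in> owned own A q" "a \<notin> owned own A q"
    using assms by (auto simp: owned_def)
  then show ?thesis
    using card_insert_Diff_swap[OF finite_owned[OF assms(1)]] by simp
next
  case False
  then show ?thesis using assms by (auto simp: owned_def intro!: arg_cong[where f=card])
qed

lemma card_owned_exchange_mono:
  assumes "finite A" "q \<noteq> own b"
  shows "card (owned own A q) \<le> card (owned own (insert a (A - {b})) q)"
  by (rule card_mono) (use assms in \<open>auto simp: owned_def\<close>)

lemma card_owned_exchange_gain:
  assumes "finite A" "a \<notin> A" "own a \<noteq> own b"
  shows "card (owned own A (own a)) < card (owned own (insert a (A - {b})) (own a))"
  by (rule psubset_card_mono) (use assms in \<open>auto simp: owned_def\<close>)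

lemma cov_less_obtain:
  assumes "finite (\<Union>M)" "cov own M q < cov own M' q"
  obtains v where "v \<in> \<Union>M'" "v \<notin> \<Union>M" "own v = q"
proof -
  have "\<not> owned own (\<Union>M') q \<subseteq> owned own (\<Union>M) q"
  proof
    assume "owned own (\<Union>M') q \<subseteq> owned own (\<Union>M) q"
    then have "cov own M' q \<le> cov own M q"
      unfolding cov_def by (rule card_mono[OF finite_owned[OF assms(1)]])
    with assms(2) show False by simp
  qed
  then show ?thesis using that by (auto simp: owned_def)
qed

lemma card_edges_touching_eq_cov:
  assumes M: "matching_of F M" and owners: "\<forall>e\<in>M. \<forall>u\<in>e. \<forall>w\<in>e. u \<noteq> w \<longrightarrow> own u \<noteq> own w"
  shows "card {e\<in>M. \<exists>v\<in>e. own v = q} = cov own M q"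
proof -
  define A where "A = {e\<in>M. \<exists>v\<in>e. own v = q}"
  define g where "g e = (THE v. v \<in> e \<and> own v = q)" for e
  have g: "g e \<in> e \<and> own (g e) = q" and g_unique: "\<And>v. v \<in> e \<Longrightarrow> own v = q \<Longrightarrow> v = g e"
    if eA: "e \<in> A" for e
  proof -
    obtain v where v: "v \<in> e" "own v = q" and e: "e \<in> M" using eA unfolding A_def by blast
    have ex1: "\<exists>!v. v \<in> e \<and> own v = q"
    proof (rule ex1I[of _ v])
      fix y assume "y \<in> e \<and> own y = q"
      then show "y = v" using owners e v by metis
    qed (use v in simp)
    show "g e \<in> e \<and> own (g e) = q"
      unfolding g_def by (rule theI'[OF ex1])
    show "v' = g e" if "v' \<in> e" "own v' = q" for v'
      unfolding g_def using that by (simp add: the1_equality[OF ex1])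
  qed
  have "inj_on g A"
  proof (rule inj_onI)
    fix e1 e2 assume "e1 \<in> A" "e2 \<in> A" "g e1 = g e2"
    then show "e1 = e2"
      using g[of e1] g[of e2] matching_of_vertex_edge_unique[OF M] unfolding A_def by auto
  qed
  moreover have "g ` A = owned own (\<Union>M) q"
  proof
    show "g ` A \<subseteq> owned own (\<Union>M) q" using g unfolding A_def owned_def by blast
    show "owned own (\<Union>M) q \<subseteq> g ` A"
    proof
      fix x assume "x \<in> owned own (\<Union>M) q"
      then obtain e where e: "e \<in> M" "x \<in> e" "own x = q" by (auto simp: owned_def)
      then have "e \<in> A" unfolding A_def by blast
      then show "x \<in> g ` A" using g_unique[OF \<open>e \<in> A\<close> e(2,3)] by blast
    qed
  qed
  ultimately show ?thesis using card_image unfolding cov_def A_def by fastforce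
qed

section \<open>The lexicographic IA rule\<close>

lemma prior_total: "r \<noteq> q \<Longrightarrow> prior own R r q \<or> prior own R q r"
  unfolding prior_def by auto

lemma prior_asym: "prior own R r q \<Longrightarrow> \<not> prior own R q r"
  unfolding prior_def by auto

lemma ia_rule_cov_cong:
  assumes "ia_rule N own R F M" "max_matching_of F M'" "cov own M' = cov own M"
  shows "ia_rule N own R F M'"
  using assms by (simp add: ia_rule_def lex_geq_def)

lemma ia_rule_exchange:
  assumes ia: "ia_rule N own R F M" and F: "finite F" "\<forall>e\<in>F. is_edge e"
    and M': "matching_of F M'" "\<Union>M' = insert a (\<Union>M - {b})"
    and ab: "a \<notin> \<Union>M" "b \<in> \<Union>M" "own a \<in> N" "own a \<noteq> own b"
  shows "prior own R (own b) (own a)"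
proof -
  have M: "max_matching_of F M" using ia by (simp add: ia_rule_def)
  have fin: "finite (\<Union>M)"
    using finite_Union_matching[OF _ F] M by (simp add: max_matching_of_def)
  have "card (\<Union>M') = card (\<Union>M)"
    unfolding M'(2) by (rule card_insert_Diff_swap[OF fin ab(2,1)])
  then have "lex_geq N own R M M'"
    using ia max_matching_of_card_Union_eq[OF M M'(1) F] by (simp add: ia_rule_def)
  moreover have gain: "cov own M (own a) < cov own M' (own a)"
    unfolding cov_def M'(2) by (rule card_owned_exchange_gain[OF fin ab(1,4)])
  moreover have "cov own M q \<le> cov own M' q" if "q \<noteq> own b" for q
    unfolding cov_def M'(2) by (rule card_owned_exchange_mono[where own = own, OF fin that])
  ultimately have "\<not> prior own R (own a) (own b)"
    using ab(3) unfolding lex_geq_def by (metis leD less_imp_neq)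
  then show ?thesis using prior_total ab(4) by blast
qed

lemma ia_rule_cov_le_restriction:
  assumes F: "finite F" "\<forall>e\<in>F. is_edge e" and owners: "\<forall>x\<in>\<Union>F. own x \<in> N"
    and H: "H = {e \<in> F. e \<inter> S = {}}" and S: "\<forall>x\<in>S. own x = p"
    and prior_mono: "\<And>r. prior own R2 r p \<Longrightarrow> prior own R1 r p"
    and ia1: "ia_rule N own R1 H M1" and ia2: "ia_rule N own R2 F M2"
  shows "cov own M1 p \<le> cov own M2 p"
  using ia2
proof (induction "card (sym_diff M1 M2)" arbitrary: M2 rule: less_induct)
  case less
  have H_fin: "finite H" "\<forall>e\<in>H. is_edge e" using F H by auto
  have M1: "matching_of H M1" "matching_of F M1" "M1 \<subseteq> H"
    using ia1 H by (auto simp: ia_rule_def max_matching_of_def matching_of_def)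
  have M2: "max_matching_of F M2" "matching_of F M2"
    using less.prems by (auto simp: ia_rule_def max_matching_of_def)
  show ?case
  proof (rule ccontr)
    assume "\<not> cov own M1 p \<le> cov own M2 p"
    then obtain v where v: "v \<in> \<Union>M1" "v \<notin> \<Union>M2" "own v = p"
      using cov_less_obtain finite_Union_matching[OF M2(2) F] by (metis not_le_imp_less)
    obtain w N1 N2 where w: "w \<in> \<Union>M2 - \<Union>M1"
      and N2: "max_matching_of F N2" "\<Union>N2 = insert v (\<Union>M2 - {w})"
        "card (sym_diff M1 N2) < card (sym_diff M1 M2)"
      and N1: "matching_of F N1" "\<Union>N1 = insert w (\<Union>M1 - {v})" "\<forall>e\<in>N1 - M1. e \<subseteq> insert w (\<Union>M1)"
      by (rule alternating_path_exchange[OF M1(2) M2(1) F v(1,2)])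
    show False
    proof (cases "own w = p")
      case True
      \<comment> \<open>N2 ties with M2, so it is selected as well, and it is closer to M1\<close>
      have "cov own N2 q = cov own M2 q" for q
        unfolding cov_def N2(2) using finite_Union_matching[OF M2(2) F] v w True
        by (simp add: card_owned_exchange_same_owner)
      then have "ia_rule N own R2 F N2"
        using ia_rule_cov_cong[OF less.prems N2(1)] by presburger
      then have "cov own M1 p \<le> cov own N2 p"
        using less.hyps N2(3) by blast
      then show False
        using \<open>\<not> cov own M1 p \<le> cov own M2 p\<close> \<open>cov own N2 p = cov own M2 p\<close> by simp
    next
      case False
      \<comment> \<open>the path trades a matched vertex of p against one of own w: M2 forbids the trade
        if own w precedes p, M1 forbids the reverse trade if p precedes own w\<close>
      have "M1 \<subseteq> F" "M2 \<subseteq> F"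
        using M1(2) M2(2) by (simp_all add: matching_of_def)
      then have owners_vw: "own v \<in> N" "own w \<in> N"
        using v(1) w owners by blast+
      have "own v \<noteq> own w" using False v(3) by simp
      then have "prior own R2 (own w) (own v)"
        using ia_rule_exchange[OF less.prems F _ N2(2) v(2) _ owners_vw(1)] N2(1) w
        by (simp add: max_matching_of_def)
      then have "prior own R1 (own w) p" using v(3) by (simp add: prior_mono)
      have "\<Union>M1 \<inter> S = {}" "w \<notin> S"
        using M1(3) H False S by auto
      moreover have "N1 \<subseteq> F" using N1(1) by (simp add: matching_of_def)
      ultimately have "N1 \<subseteq> H"
        using N1(3) M1(3) H by blast
      then have "matching_of H N1"
        using N1(1) by (simp add: matching_of_def)
      then have "prior own R1 (own v) (own w)"
        using ia_rule_exchange[OF ia1 H_fin _ N1(2) _ v(1) owners_vw(2)] w \<open>own v \<noteq> own w\<close> by simp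
      then show False using prior_asym \<open>prior own R1 (own w) p\<close> v(3) by blast
    qed
  qed
qed

section \<open>Hiding vertices\<close>

lemma best_utility_attained:
  assumes "finite Fp"
  obtains Mp where "matching_of Fp Mp"
    "best_utility N own EI IA R Fp Mo p = utility N own EI IA R (Mo(p := Mp)) p"
proof -
  let ?U = "(\<lambda>Mp. utility N own EI IA R (Mo(p := Mp)) p) ` {Mp. matching_of Fp Mp}"
  have "finite ?U"
    using finite_matchings[OF assms] by simp
  moreover have "?U \<noteq> {}"
    using matching_of_empty by blast
  ultimately have "best_utility N own EI IA R Fp Mo p \<in> ?U"
    unfolding best_utility_def by (rule Max_in)
  then show ?thesis using that by auto
qed

lemma best_utility_ge:
  assumes "finite Fp" "matching_of Fp Mp"
  shows "utility N own EI IA R (Mo(p := Mp)) p \<le> best_utility N own EI IA R Fp Mo p"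
  unfolding best_utility_def using finite_matchings[OF assms(1)] assms(2) by simp

lemma UN_profile_update:
  assumes "p \<in> N"
  shows "(\<Union>q\<in>N. \<Union>((Mo(p := X)) q)) = \<Union>X \<union> (\<Union>q\<in>N - {p}. \<Union>(Mo q))"
proof -
  have "(\<Union>q\<in>N. \<Union>((Mo(p := X)) q)) = \<Union>X \<union> (\<Union>q\<in>N - {p}. \<Union>((Mo(p := X)) q))"
    using assms by (metis (no_types, lifting) UN_insert fun_upd_same insert_Diff)
  also have "(\<Union>q\<in>N - {p}. \<Union>((Mo(p := X)) q)) = (\<Union>q\<in>N - {p}. \<Union>(Mo q))"
    by (rule SUP_cong) auto
  finally show ?thesis .
qed

lemma utility_eq_cov:
  assumes owners: "\<And>e. e \<in> EI \<Longrightarrow> \<forall>u\<in>e. \<forall>w\<in>e. u \<noteq> w \<longrightarrow> own u \<noteq> own w"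
    and IA_rule: "\<And>F. F \<subseteq> {e \<in> EI. e \<subseteq> R} \<Longrightarrow> ia_rule N own R F (IA R F)"
  shows "utility N own EI IA R Mq p
    = 2 * card (Mq p) + cov own (IA R (available EI R (\<Union>q\<in>N. \<Union>(Mq q)))) p"
proof -
  let ?F = "available EI R (\<Union>q\<in>N. \<Union>(Mq q))"
  have "?F \<subseteq> {e \<in> EI. e \<subseteq> R}" by (auto simp: available_def)
  then have "matching_of ?F (IA R ?F)"
    using IA_rule by (simp add: ia_rule_def max_matching_of_def)
  then have M: "matching_of EI (IA R ?F)"
    by (rule matching_of_mono[rotated]) (auto simp: available_def)
  moreover have "IA R ?F \<subseteq> EI"
    using M by (simp add: matching_of_def)
  then have "\<forall>e\<in>IA R ?F. \<forall>u\<in>e. \<forall>w\<in>e. u \<noteq> w \<longrightarrow> own u \<noteq> own w"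
    using owners by blast
  ultimately show ?thesis
    unfolding utility_def using card_edges_touching_eq_cov by simp
qed

lemma prior_hiding:
  assumes "finite V" "V' \<subseteq> owned own V p" "prior own V r p"
  shows "prior own (V - V') r p"
proof -
  have "r \<noteq> p" using assms(3) by (auto simp: prior_def)
  then have "owned own (V - V') r = owned own V r"
    using assms(2) by (auto simp: owned_def)
  moreover have "card (owned own (V - V') p) \<le> card (owned own V p)"
    by (rule card_mono) (use assms(1) in \<open>auto simp: owned_def\<close>)
  ultimately show ?thesis using assms(3) unfolding prior_def by auto
qed

lemma utility_hiding_le:
  assumes V: "finite V" "own ` V \<subseteq> N"
    and EI: "\<And>e. e \<in> EI \<Longrightarrow> is_edge e \<and> e \<subseteq> V \<and> (\<forall>u\<in>e. \<forall>w\<in>e. u \<noteq> w \<longrightarrow> own u \<noteq> own w)"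
    and IA_rule: "\<And>R F. R \<subseteq> V \<Longrightarrow> F \<subseteq> {e \<in> EI. e \<subseteq> R} \<Longrightarrow> ia_rule N own R F (IA R F)"
    and p: "p \<in> N" "V' \<subseteq> owned own V p"
    and M: "finite Mh" "finite Mv" "Mh \<inter> Mv = {}" "\<Union>Mv \<subseteq> V'"
  shows "utility N own EI IA (V - V') (Mo(p := Mh)) p + 2 * card Mv
    \<le> utility N own EI IA V (Mo(p := Mh \<union> Mv)) p"
proof -
  define U1 where "U1 = (\<Union>q\<in>N. \<Union>((Mo(p := Mh)) q))"
  define U2 where "U2 = (\<Union>q\<in>N. \<Union>((Mo(p := Mh \<union> Mv)) q))"
  define H where "H = available EI (V - V') U1"
  define F where "F = available EI V U2"
  have U2: "U2 = U1 \<union> \<Union>Mv"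
    unfolding U1_def U2_def UN_profile_update[OF p(1)] by auto
  have H: "H = {e \<in> F. e \<inter> V' = {}}"
    unfolding H_def F_def available_def U2 using M(4) by auto
  have ia1: "ia_rule N own (V - V') H (IA (V - V') H)"
    by (rule IA_rule) (auto simp: H_def available_def)
  have ia2: "ia_rule N own V F (IA V F)"
    by (rule IA_rule) (auto simp: F_def available_def)
  have "F \<subseteq> Pow V" "\<forall>e\<in>F. is_edge e"
    using EI unfolding F_def available_def by blast+
  then have F_fin: "finite F" "\<forall>e\<in>F. is_edge e" "\<forall>x\<in>\<Union>F. own x \<in> N"
    using V finite_subset by blast+
  have V'_owner: "\<forall>x\<in>V'. own x = p"
    using p(2) by (auto simp: owned_def)
  have cov_le: "cov own (IA (V - V') H) p \<le> cov own (IA V F) p"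
    using ia_rule_cov_le_restriction[OF F_fin H V'_owner _ ia1 ia2] prior_hiding[OF V(1) p(2)]
    by blast
  have card_Mhv: "card (Mh \<union> Mv) = card Mh + card Mv"
    using M(1-3) by (simp add: card_Un_disjoint)
  have owners: "\<And>e. e \<in> EI \<Longrightarrow> \<forall>u\<in>e. \<forall>w\<in>e. u \<noteq> w \<longrightarrow> own u \<noteq> own w"
    using EI by blast
  have "utility N own EI IA (V - V') (Mo(p := Mh)) p = 2 * card Mh + cov own (IA (V - V') H) p"
    using utility_eq_cov[where IA = IA and R = "V - V'", OF owners IA_rule[OF Diff_subset]]
    unfolding H_def U1_def by simp
  moreover have "utility N own EI IA V (Mo(p := Mh \<union> Mv)) p
      = 2 * card (Mh \<union> Mv) + cov own (IA V F) p"
    using utility_eq_cov[where IA = IA and R = V, OF owners IA_rule[OF subset_refl]]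
    unfolding F_def U2_def by simp
  ultimately show ?thesis using cov_le card_Mhv by simp
qed

theorem lemma1:
  fixes N :: "'p::linorder set" and own :: "'v \<Rightarrow> 'p" and V :: "'v set"
    and Ein :: "'p \<Rightarrow> 'v set set" and EI :: "'v set set"
    and IA :: "'v set \<Rightarrow> 'v set set \<Rightarrow> 'v set set"
    and p :: 'p and Mo :: "'p \<Rightarrow> 'v set set" and V' :: "'v set"
  assumes "finite N" and "finite V" and "own ` V \<subseteq> N"
    and "\<And>q e. q \<in> N \<Longrightarrow> e \<in> Ein q \<Longrightarrow> is_edge e \<and> e \<subseteq> owned own V q"
    and "\<And>e. e \<in> EI \<Longrightarrow> is_edge e \<and> e \<subseteq> V \<and> (\<forall>u\<in>e. \<forall>w\<in>e. u \<noteq> w \<longrightarrow> own u \<noteq> own w)"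
    and IA_rule: "\<And>R F. R \<subseteq> V \<Longrightarrow> F \<subseteq> {e \<in> EI. e \<subseteq> R} \<Longrightarrow> ia_rule N own R F (IA R F)"
    and "p \<in> N"
    and "\<And>q. q \<in> N \<Longrightarrow> q \<noteq> p \<Longrightarrow> matching_of (Ein q) (Mo q)"
    and "V' \<subseteq> owned own V p"
  shows "best_utility N own EI IA V (Ein p) Mo p \<ge>
           2 * nu {e \<in> Ein p. e \<subseteq> V'}
           + best_utility N own EI IA (V - V') {e \<in> Ein p. e \<inter> V' = {}} Mo p"
proof -
  let ?Fh = "{e \<in> Ein p. e \<inter> V' = {}}" and ?Fv = "{e \<in> Ein p. e \<subseteq> V'}"
  have "Ein p \<subseteq> Pow V" and "\<forall>e\<in>Ein p. is_edge e"
    using assms(4)[OF assms(7)] by (auto simp: owned_def)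
  then have fin: "finite (Ein p)" and "{} \<notin> Ein p"
    using finite_subset[OF _ finite_Pow_iff[THEN iffD2, OF assms(2)]] by (auto simp: is_edge_def)
  have "finite ?Fh" "finite ?Fv" using fin by simp_all
  obtain Mh where Mh: "matching_of ?Fh Mh" and best_hidden:
      "best_utility N own EI IA (V - V') ?Fh Mo p = utility N own EI IA (V - V') (Mo(p := Mh)) p"
    by (rule best_utility_attained[OF \<open>finite ?Fh\<close>])
  obtain Mv where Mv: "matching_of ?Fv Mv" "card Mv = nu ?Fv"
    by (rule nu_attained[OF \<open>finite ?Fv\<close>])
  have Mhv: "matching_of (Ein p) (Mh \<union> Mv)" "Mh \<inter> Mv = {}"
    by (rule matching_of_split[OF Mh Mv(1) \<open>{} \<notin> Ein p\<close>])+
  have "Mh \<subseteq> ?Fh" "Mv \<subseteq> ?Fv"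
    using Mh Mv(1) by (simp_all add: matching_of_def)
  then have "finite Mh" "finite Mv" "\<Union>Mv \<subseteq> V'"
    using \<open>finite ?Fh\<close> \<open>finite ?Fv\<close> by (auto intro: finite_subset)
  then have "utility N own EI IA (V - V') (Mo(p := Mh)) p + 2 * card Mv
      \<le> utility N own EI IA V (Mo(p := Mh \<union> Mv)) p"
    by (intro utility_hiding_le[OF assms(2,3,5) IA_rule assms(7,9)] Mhv(2))
  also have "\<dots> \<le> best_utility N own EI IA V (Ein p) Mo p"
    by (rule best_utility_ge[OF fin Mhv(1)])
  finally show ?thesis
    using best_hidden Mv(2) by simp
qed

end
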